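(* Let $D$ be a connected link diagram with $n$ ordered crossings, let $\mathbb{G}$ be its all-$A$ ribbon graph described by the permutations $(\sigma_0,\sigma_1,\sigma_2)$ of $\{1,\dots,2n\}$ as in the context, and let $\mathbb{Q}$ be a quasi-tree of $\mathbb{G}$. Define the permutation $\sigma$ of $\{1,\dots,2n\}$ by $$\sigma(i)=\begin{cases}\sigma_0(i) & \text{if } i\notin\mathbb{Q},\\ \sigma_2^{-1}(i) & \text{if } i\in\mathbb{Q}.\end{cases}$$ Then $\mathbb{Q}$ corresponds to the ordered chord diagram $C_{\mathbb{Q}}$ whose consecutive markings in the positive direction are given by $\sigma$ (i.e. the marks read $i,\sigma(i),\sigma^2(i),\dots$ around the circle, with chords joining $2k-1$ and $2k$ for each $k$); this chord diagram parametrizes the single boundary curve $\gamma_{\mathbb{Q}}$ of the ribbon surface of $\mathbb{Q}$, each half-edge being marked once along $\gamma_{\mathbb{Q}}$.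
   Context: Let $D$ be a connected link diagram with crossings numbered $1,\dots,n$. Each crossing has an $A$-smoothing and a $B$-smoothing (Kauffman's convention); the all-$A$ state smooths every crossing by $A$. Position each crossing so its strands are parallel to $y=x$ and $y=-x$; the $i$-th crossing gives two half-edges labelled $2i-1$ and $2i$, marked on the all-$A$ state circles near the crossing in the half-planes $y>x$ and $y<x$ respectively. Orient each all-$A$ state circle counterclockwise if it is nested inside an even number of other state circles and clockwise otherwise (this is the positive direction). Let $\sigma_0$ be the permutation of $\{1,\dots,2n\}$ sending each mark to the next mark met going in the positive direction along its state circle, $\sigma_1=\prod_{i=1}^n(2i-1,\,2i)$, and $\sigma_2=\sigma_1\circ\sigma_0^{-1}$. The all-$A$ ribbon graph $\mathbb{G}$ has the orbits of $\sigma_0$ (the all-$A$ state circles) as vertices, the orbits of $\sigma_1$ (crossings) as edges, with cyclic order at vertices given by $\sigma_0$; as a surface it consists of a disk for each vertex and an untwisted band for each edge, forming an orientable surface. A spanning subgraph $\mathbb{H}$ has all vertices of $\mathbb{G}$ and a subset of its edges; a half-edge $i$ is said to be in $\mathbb{H}$ if its edge is. The faces of $\mathbb{H}$ are the boundary components of the surface formed by the vertex disks and the bands of edges of $\mathbb{H}$. A quasi-tree is a spanning subgraph with exactly one face; for a quasi-tree $\mathbb{Q}$, $\gamma_{\mathbb{Q}}$ denotes this single boundary curve. An ordered chord diagram is a circle marked with $\{1,\dots,2n\}$ in some order with chords joining each pair $\{2i-1,2i\}$. *)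

theory Defs
  imports "HOL-Combinatorics.Combinatorics"
begin

text \<open>Half-edges (marks) are 1..2n; crossing/edge k carries half-edges 2k-1 and 2k.\<close>

definition edge_of :: "nat \<Rightarrow> nat" where
  "edge_of i = (i + 1) div 2"

definition sigma1 :: "nat \<Rightarrow> nat \<Rightarrow> nat" where
  "sigma1 n i = (if i \<in> {1..2*n} then (if odd i then i + 1 else i - 1) else i)"

definition sigma2 :: "nat \<Rightarrow> (nat \<Rightarrow> nat) \<Rightarrow> nat \<Rightarrow> nat" where
  "sigma2 n s0 = sigma1 n \<circ> inv s0"

definition ribbon_connected :: "nat \<Rightarrow> (nat \<Rightarrow> nat) \<Rightarrow> bool" where
  "ribbon_connected n s0 \<longleftrightarrow>
     (\<forall>i\<in>{1..2*n}. \<forall>j\<in>{1..2*n}.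
        (i, j) \<in> ({(a, s0 a) | a. a \<in> {1..2*n}} \<union> {(a, sigma1 n a) | a. a \<in> {1..2*n}})\<^sup>*)"

text \<open>Combinatorial model of the boundary of the ribbon surface of a spanning subgraph H
  (a set of edges).  If the edge of mark i is not in H, the vertex circle passes through
  the point Pt i.  If it is in H, the band is attached around mark i, and the boundary
  has the two points Pre i (just before the band, in the positive direction of the
  vertex circle) and Post i (just after it).\<close>
datatype bpt = Pt nat | Pre nat | Post nat

definition in_sub :: "nat set \<Rightarrow> nat \<Rightarrow> bool" where
  "in_sub H i \<longleftrightarrow> edge_of i \<in> H"

definition bpts :: "nat \<Rightarrow> nat set \<Rightarrow> bpt set" where
  "bpts n H = {Pt i | i. i \<in> {1..2*n} \<and> \<not> in_sub H i}
             \<union> {Pre i | i. i \<in> {1..2*n} \<and> in_sub H i}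
             \<union> {Post i | i. i \<in> {1..2*n} \<and> in_sub H i}"

text \<open>The point at which the boundary curve, travelling in the positive direction along
  the vertex circle, reaches (and marks) half-edge i.\<close>
definition arr :: "nat set \<Rightarrow> nat \<Rightarrow> bpt" where
  "arr H i = (if in_sub H i then Pre i else Pt i)"

text \<open>Successor along the boundary: along a vertex arc to the next mark (sigma_0),
  or across a band side (untwisted band, orientable surface) to the other end.\<close>
fun bnext :: "nat \<Rightarrow> (nat \<Rightarrow> nat) \<Rightarrow> nat set \<Rightarrow> bpt \<Rightarrow> bpt" where
  "bnext n s0 H (Pt i) = arr H (s0 i)"
| "bnext n s0 H (Post i) = arr H (s0 i)"
| "bnext n s0 H (Pre i) = Post (sigma1 n i)"

text \<open>Faces = boundary components = orbits of the boundary successor.\<close>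
definition faces :: "nat \<Rightarrow> (nat \<Rightarrow> nat) \<Rightarrow> nat set \<Rightarrow> bpt set set" where
  "faces n s0 H = (\<lambda>p. orbit (bnext n s0 H) p) ` bpts n H"

definition quasi_tree :: "nat \<Rightarrow> (nat \<Rightarrow> nat) \<Rightarrow> nat set \<Rightarrow> bool" where
  "quasi_tree n s0 Q \<longleftrightarrow> Q \<subseteq> {1..n} \<and> card (faces n s0 Q) = 1"

definition sigmaQ :: "nat \<Rightarrow> (nat \<Rightarrow> nat) \<Rightarrow> nat set \<Rightarrow> nat \<Rightarrow> nat" where
  "sigmaQ n s0 Q i = (if i \<in> {1..2*n}
      then (if in_sub Q i then inv (sigma2 n s0) i else s0 i) else i)"

text \<open>An ordered chord diagram with markings 1..2n read in the order given by a
  permutation s: s permutes {1..2n} in one cycle (chords join 2k-1 and 2k implicitly).\<close>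
definition ordered_chord_diagram :: "nat \<Rightarrow> (nat \<Rightarrow> nat) \<Rightarrow> bool" where
  "ordered_chord_diagram n s \<longleftrightarrow> s permutes {1..2*n} \<and> cyclic_on s {1..2*n}"

end

theory Submission
  imports Defs
begin

text \<open>Walking along the boundary curve of Q in the positive direction, the curve
  leaves a mark i either along the vertex circle, reaching the next mark sigma_0 i, or,
  when the edge of i lies in Q, by running along a side of its band to the other end
  sigma_1 i and then continuing to sigma_0 (sigma_1 i) = sigma_2^-1 i.  So consecutive marks
  on the curve are related by sigma, with only band points in between.  Conversely every
  point of the curve is a mark or a band point right after a mark, so the curve, being
  the only face, meets every mark; hence one sigma-orbit contains all marks and sigma is a
  single cycle.\<close>

lemma sigma1_sigma1 [simp]: "sigma1 n (sigma1 n i) = i"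
  unfolding sigma1_def by (auto simp: odd_pos) presburger+

lemma sigma1_in_marks: "i \<in> {1..2*n} \<Longrightarrow> sigma1 n i \<in> {1..2*n}"
  unfolding sigma1_def by auto presburger

lemma edge_of_sigma1 [simp]: "edge_of (sigma1 n i) = edge_of i"
  unfolding sigma1_def edge_of_def by (auto elim!: oddE evenE)

lemma in_sub_sigma1 [simp]: "in_sub H (sigma1 n i) \<longleftrightarrow> in_sub H i"
  unfolding in_sub_def by simp

lemma inv_sigma1: "inv (sigma1 n) = sigma1 n"
  by (rule inv_unique_comp) (auto simp: fun_eq_iff)

lemma inv_sigma2:
  assumes "bij s0"
  shows "inv (sigma2 n s0) = s0 \<circ> sigma1 n"
proof -
  have "bij (sigma1 n)"
    by (rule o_bij[of "sigma1 n"]) (auto simp: fun_eq_iff)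
  then have "inv (sigma1 n \<circ> inv s0) = inv (inv s0) \<circ> inv (sigma1 n)"
    using assms by (intro o_inv_distrib) (auto simp: bij_imp_bij_inv)
  then show ?thesis
    using assms by (simp add: sigma2_def inv_sigma1 inv_inv_eq)
qed

definition band_swap :: "nat \<Rightarrow> nat set \<Rightarrow> nat \<Rightarrow> nat" where
  "band_swap n H i = (if i \<in> {1..2*n} \<and> in_sub H i then sigma1 n i else i)"

lemma band_swap_band_swap [simp]: "band_swap n H (band_swap n H i) = i"
  unfolding band_swap_def using sigma1_in_marks[of i n] by auto

lemma band_swap_permutes: "band_swap n H permutes {1..2*n}"
proof (rule inj_imp_permutes)
  show "inj_on (band_swap n H) {1..2*n}"
    by (metis band_swap_band_swap inj_onI)
qed (use sigma1_in_marks[of _ n] in \<open>auto simp: band_swap_def\<close>)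

lemma sigmaQ_eq_comp_band_swap:
  assumes "s0 permutes {1..2*n}"
  shows "sigmaQ n s0 H = s0 \<circ> band_swap n H"
proof
  fix i
  show "sigmaQ n s0 H i = (s0 \<circ> band_swap n H) i"
    using inv_sigma2[OF permutes_bij[OF assms]] permutes_not_in[OF assms, of i]
    by (simp add: sigmaQ_def band_swap_def)
qed

lemma sigmaQ_apply_mark:
  assumes "s0 permutes {1..2*n}" "i \<in> {1..2*n}"
  shows "sigmaQ n s0 H i = (if in_sub H i then s0 (sigma1 n i) else s0 i)"
  unfolding sigmaQ_eq_comp_band_swap[OF assms(1)] using assms(2) by (simp add: band_swap_def)

lemma sigmaQ_permutes:
  assumes "s0 permutes {1..2*n}"
  shows "sigmaQ n s0 H permutes {1..2*n}"
  unfolding sigmaQ_eq_comp_band_swap[OF assms]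
  by (rule permutes_compose[OF band_swap_permutes assms])

lemma permutation_sigmaQ:
  assumes "s0 permutes {1..2*n}"
  shows "permutation (sigmaQ n s0 H)"
  using sigmaQ_permutes[OF assms] permutation_permutes by blast

lemma arr_eq_iff [simp]: "arr H i = arr H j \<longleftrightarrow> i = j"
  unfolding arr_def by auto

lemma arr_neq_Post [simp]: "arr H i \<noteq> Post j" "Post j \<noteq> arr H i"
  unfolding arr_def by simp_all

lemma arr_in_bpts: "i \<in> {1..2*n} \<Longrightarrow> arr H i \<in> bpts n H"
  unfolding bpts_def arr_def by auto

lemma bnext_arr_not_in_sub:
  assumes "s0 permutes {1..2*n}" "i \<in> {1..2*n}" "\<not> in_sub H i"
  shows "bnext n s0 H (arr H i) = arr H (sigmaQ n s0 H i)"
  by (simp add: sigmaQ_apply_mark[OF assms(1,2)] assms(3) arr_def)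

lemma bnext_arr_in_sub:
  assumes "in_sub H i"
  shows "bnext n s0 H (arr H i) = Post (sigma1 n i)"
  using assms by (simp add: arr_def)

lemma bnext_Post_sigma1:
  assumes "s0 permutes {1..2*n}" "i \<in> {1..2*n}" "in_sub H i"
  shows "bnext n s0 H (Post (sigma1 n i)) = arr H (sigmaQ n s0 H i)"
  by (simp add: sigmaQ_apply_mark[OF assms(1,2)] assms(3))

lemma bnext_reaches_sigmaQ:
  assumes "s0 permutes {1..2*n}" "i \<in> {1..2*n}"
  shows "\<exists>k>0. (bnext n s0 H ^^ k) (arr H i) = arr H (sigmaQ n s0 H i)
           \<and> (\<forall>m. 0 < m \<and> m < k \<longrightarrow> (bnext n s0 H ^^ m) (arr H i) \<notin> arr H ` {1..2*n})"
proof (cases "in_sub H i")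
  case True
  have "(bnext n s0 H ^^ 2) (arr H i) = bnext n s0 H (bnext n s0 H (arr H i))"
    by (simp add: numeral_2_eq_2)
  also have "\<dots> = arr H (sigmaQ n s0 H i)"
    by (simp only: bnext_arr_in_sub[OF True] bnext_Post_sigma1[OF assms True])
  finally have "(bnext n s0 H ^^ 2) (arr H i) = arr H (sigmaQ n s0 H i)" .
  moreover have "\<forall>m. 0 < m \<and> m < 2 \<longrightarrow> (bnext n s0 H ^^ m) (arr H i) \<notin> arr H ` {1..2*n}"
    by (auto simp: less_2_cases_iff bnext_arr_in_sub[OF True])
  ultimately show ?thesis
    by (intro exI[of _ 2]) simp
next
  case False
  then have "(bnext n s0 H ^^ 1) (arr H i) = arr H (sigmaQ n s0 H i)"
    using bnext_arr_not_in_sub[OF assms] by simp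
  then show ?thesis
    by (intro exI[of _ 1]) simp
qed

lemma bnext_reaches_sigmaQ_funpow:
  assumes "s0 permutes {1..2*n}" "i \<in> {1..2*n}"
  shows "\<exists>k\<ge>t. (bnext n s0 H ^^ k) (arr H i) = arr H ((sigmaQ n s0 H ^^ t) i)"
proof (induction t)
  case 0
  show ?case by (intro exI[of _ 0]) simp
next
  case (Suc t)
  then obtain k where k: "k \<ge> t" "(bnext n s0 H ^^ k) (arr H i) = arr H ((sigmaQ n s0 H ^^ t) i)"
    by blast
  have "(sigmaQ n s0 H ^^ t) i \<in> {1..2*n}"
    using permutes_in_funpow_image[OF sigmaQ_permutes[OF assms(1)] assms(2)] .
  from bnext_reaches_sigmaQ[OF assms(1) this, of H]
  obtain l where l: "l > 0" "(bnext n s0 H ^^ l) (arr H ((sigmaQ n s0 H ^^ t) i))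
      = arr H ((sigmaQ n s0 H ^^ Suc t) i)"
    by auto
  have "(bnext n s0 H ^^ (l + k)) (arr H i) = arr H ((sigmaQ n s0 H ^^ Suc t) i)"
    using k l by (simp add: funpow_add)
  then show ?case using k(1) l(1) by (intro exI[of _ "l + k"]) auto
qed

lemma bnext_funpow_arr_cases:
  assumes "s0 permutes {1..2*n}" "i \<in> {1..2*n}"
  shows "\<exists>t. (bnext n s0 H ^^ k) (arr H i) = arr H ((sigmaQ n s0 H ^^ t) i)
           \<or> (bnext n s0 H ^^ k) (arr H i) = Post (sigma1 n ((sigmaQ n s0 H ^^ t) i))
               \<and> in_sub H ((sigmaQ n s0 H ^^ t) i)"
proof (induction k)
  case 0
  show ?case by (intro exI[of _ 0]) simp
next
  case (Suc k)
  then obtain t where t: "(bnext n s0 H ^^ k) (arr H i) = arr H ((sigmaQ n s0 H ^^ t) i)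
           \<or> (bnext n s0 H ^^ k) (arr H i) = Post (sigma1 n ((sigmaQ n s0 H ^^ t) i))
               \<and> in_sub H ((sigmaQ n s0 H ^^ t) i)"
    by blast
  define x where "x = (sigmaQ n s0 H ^^ t) i"
  have x: "x \<in> {1..2*n}"
    unfolding x_def using permutes_in_funpow_image[OF sigmaQ_permutes[OF assms(1)] assms(2)] .
  have next_x: "(sigmaQ n s0 H ^^ Suc t) i = sigmaQ n s0 H x"
    by (simp add: x_def)
  from t consider (mark) "(bnext n s0 H ^^ k) (arr H i) = arr H x"
    | (band) "(bnext n s0 H ^^ k) (arr H i) = Post (sigma1 n x)" "in_sub H x"
    unfolding x_def by blast
  then show ?case
  proof cases
    case mark
    show ?thesis
    proof (cases "in_sub H x")
      case True
      then have "(bnext n s0 H ^^ Suc k) (arr H i) = Post (sigma1 n x)"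
        using mark by (simp add: bnext_arr_in_sub)
      then show ?thesis
        using True unfolding x_def by blast
    next
      case False
      then have "(bnext n s0 H ^^ Suc k) (arr H i) = arr H ((sigmaQ n s0 H ^^ Suc t) i)"
        using mark bnext_arr_not_in_sub[OF assms(1) x] next_x by simp
      then show ?thesis
        by blast
    qed
  next
    case band
    then have "(bnext n s0 H ^^ Suc k) (arr H i) = arr H ((sigmaQ n s0 H ^^ Suc t) i)"
      using bnext_Post_sigma1[OF assms(1) x] next_x by simp
    then show ?thesis
      by blast
  qed
qed

lemma arr_in_bnext_orbit:
  assumes "s0 permutes {1..2*n}" "i \<in> {1..2*n}"
  shows "arr H i \<in> orbit (bnext n s0 H) (arr H i)"
proof -
  have "i \<in> orbit (sigmaQ n s0 H) i"
    using permutation_sigmaQ[OF assms(1)] by (rule permutation_self_in_orbit)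
  then obtain t where "t > 0" "(sigmaQ n s0 H ^^ t) i = i"
    unfolding orbit_altdef by auto
  moreover obtain k where "k \<ge> t" "(bnext n s0 H ^^ k) (arr H i) = arr H ((sigmaQ n s0 H ^^ t) i)"
    using bnext_reaches_sigmaQ_funpow[OF assms] by blast
  ultimately have "0 < k" "(bnext n s0 H ^^ k) (arr H i) = arr H i"
    by auto
  then show ?thesis
    unfolding orbit_altdef by (metis (mono_tags, lifting) mem_Collect_eq)
qed

lemma marks_in_sigmaQ_orbit_if_one_face:
  assumes "s0 permutes {1..2*n}" "faces n s0 H = {\<gamma>}" "i \<in> {1..2*n}" "j \<in> {1..2*n}"
  shows "j \<in> orbit (sigmaQ n s0 H) i"
proof -
  have "orbit (bnext n s0 H) (arr H x) = \<gamma>" if "x \<in> {1..2*n}" for x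
    using assms(2) arr_in_bpts[OF that] unfolding faces_def by blast
  then have "arr H j \<in> orbit (bnext n s0 H) (arr H i)"
    using arr_in_bnext_orbit[OF assms(1,4), of H] assms(3,4) by simp
  then obtain k where "(bnext n s0 H ^^ k) (arr H i) = arr H j"
    unfolding orbit_altdef by auto
  then obtain t where "j = (sigmaQ n s0 H ^^ t) i"
    using bnext_funpow_arr_cases[OF assms(1,3), where H = H and k = k] by auto
  then show ?thesis
    by (auto simp: orbit_altdef_permutation[OF permutation_sigmaQ[OF assms(1)]])
qed

theorem proposition1:
  fixes n :: nat and s0 :: "nat \<Rightarrow> nat" and Q :: "nat set"
  assumes "n \<ge> 1"
    and "s0 permutes {1..2*n}"
    and "ribbon_connected n s0"
    and "quasi_tree n s0 Q"
  shows "ordered_chord_diagram n (sigmaQ n s0 Q)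
       \<and> (\<exists>\<gamma>. faces n s0 Q = {\<gamma>}
            \<and> arr Q ` {1..2*n} \<subseteq> \<gamma>
            \<and> inj_on (arr Q) {1..2*n}
            \<and> (\<forall>i\<in>{1..2*n}. \<exists>k>0.
                 (bnext n s0 Q ^^ k) (arr Q i) = arr Q (sigmaQ n s0 Q i)
                 \<and> (\<forall>m. 0 < m \<and> m < k \<longrightarrow> (bnext n s0 Q ^^ m) (arr Q i) \<notin> arr Q ` {1..2*n})))"
proof -
  obtain \<gamma> where \<gamma>: "faces n s0 Q = {\<gamma>}"
    using assms(4) unfolding quasi_tree_def by (meson card_1_singletonE)
  have one: "1 \<in> {1..2*n}"
    using assms(1) by simp
  have "cyclic_on (sigmaQ n s0 Q) {1..2*n}"
  proof (rule cyclic_on_singleI[OF one])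
    show "{1..2*n} = orbit (sigmaQ n s0 Q) 1"
      using marks_in_sigmaQ_orbit_if_one_face[OF assms(2) \<gamma> one]
        permutes_orbit_subset[OF sigmaQ_permutes[OF assms(2)] one] by blast
  qed
  moreover have "arr Q ` {1..2*n} \<subseteq> \<gamma>"
    using arr_in_bnext_orbit[OF assms(2)] arr_in_bpts \<gamma> unfolding faces_def by blast
  ultimately show ?thesis
    unfolding ordered_chord_diagram_def
    using \<gamma> sigmaQ_permutes[OF assms(2)] bnext_reaches_sigmaQ[OF assms(2)]
    by (intro conjI exI[of _ \<gamma>]) (auto intro: inj_onI)
qed

end
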